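(* Consider federated averaging with $K$ clients over the objective $F(w)=\frac1K\sum_{k=1}^K f_k(w)$, $w\in\mathbb{R}^d$, with $Q\ge1$ local steps of stepsize $\beta>0$ and server update $w^{t+1}=w^t+\bar\Delta^t+\varepsilon^t$ (notation in the context). Assume: (A1) each $f_k$ is $L$-smooth (hence $F$ is $L$-smooth) and $F(w)\ge F_\star$ for all $w$; (A2) $\mathbb{E}[g_{k,q}^t\mid w_{k,q}^t]=\nabla f_k(w_{k,q}^t)$ for all $k,q,t$; (A3) $\|g_{k,q}^t\|\le G$ almost surely for all $k,q,t$; (A4) $\mathbb{E}[\|g_{k,q}^t-\nabla f_k(w_{k,q}^t)\|^2\mid w_{k,q}^t]\le\sigma_g^2$, and the gradient noises $g_{k,q}^t-\nabla f_k(w_{k,q}^t)$ of different clients are conditionally uncorrelated given the local iterates; (A5) the aggregation error satisfies $\mathbb{E}[\varepsilon^t\mid\mathcal{F}_t,\{\Delta_k^t\}_{k=1}^K]=0$ (hence $\mathbb{E}[\varepsilon^t\mid\mathcal{F}_t]=0$) and $\mathbb{E}\|\varepsilon^t\|^2\le\sigma_{\mathrm{air}}^2$ for all $t$. If $\beta\le\frac{1}{8LQ}$, then for every $T\ge1$, $$\frac1T\sum_{t=0}^{T-1}\mathbb{E}\|\nabla F(w^t)\|^2\le\frac{4(F(w^0)-F_\star)}{\beta QT}+2L^2\beta^2Q^2G^2+8L^3\beta^3Q^3G^2+\frac{4L\beta Q}{K}\sigma_g^2+\frac{2L}{\beta Q}\sigma_{\mathrm{air}}^2.$$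
   Context: Federated averaging (FedAvg) setup: client $k$ has a local objective $f_k:\mathbb{R}^d\to\mathbb{R}$. At round $t=0,1,\dots$ the server holds $w^t$; each client sets $w_{k,0}^t=w^t$ and runs $w_{k,q+1}^t=w_{k,q}^t-\beta g_{k,q}^t$ for $q=0,\dots,Q-1$, where $g_{k,q}^t$ are stochastic gradients. The local increment is $\Delta_k^t=w_{k,Q}^t-w^t=-\beta\sum_{q=0}^{Q-1}g_{k,q}^t$ and the ideal aggregate is $\bar\Delta^t=\frac1K\sum_{k=1}^K\Delta_k^t$ (all $K$ clients participate). The server applies $w^{t+1}=w^t+\bar\Delta^t+\varepsilon^t$, where $\varepsilon^t\in\mathbb{R}^d$ is the (over-the-air) aggregation error, and $\sigma_{\mathrm{air}}^2\ge0$ is a constant. $\mathcal{F}_t$ denotes the sigma-field generated by the global model and all randomness up to the beginning of round $t$. *)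

theory Defs
  imports "HOL-Probability.Probability"
begin

primrec fl_local :: "real \<Rightarrow> (nat \<Rightarrow> 'a::real_vector) \<Rightarrow> 'a \<Rightarrow> nat \<Rightarrow> 'a" where
  "fl_local beta h x 0 = x"
| "fl_local beta h x (Suc q) = fl_local beta h x q - beta *\<^sub>R h q"

text \<open>Global FedAvg iterate w^t (as a function of the sample point), with
  g k q t = g_{k,q}^t, clients k in {..<K}, eps t = aggregation error of round t.\<close>
primrec fl_global :: "real \<Rightarrow> nat \<Rightarrow> nat \<Rightarrow> 'a::real_vector
    \<Rightarrow> (nat \<Rightarrow> nat \<Rightarrow> nat \<Rightarrow> 'b \<Rightarrow> 'a) \<Rightarrow> (nat \<Rightarrow> 'b \<Rightarrow> 'a) \<Rightarrow> nat \<Rightarrow> 'b \<Rightarrow> 'a" where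
  "fl_global beta K Q w0 g eps 0 \<omega> = w0"
| "fl_global beta K Q w0 g eps (Suc t) \<omega> =
     (let x = fl_global beta K Q w0 g eps t \<omega> in
        x + (1 / real K) *\<^sub>R (\<Sum>k<K. fl_local beta (\<lambda>q. g k q t \<omega>) x Q - x) + eps t \<omega>)"

definition fl_witer :: "real \<Rightarrow> nat \<Rightarrow> nat \<Rightarrow> 'a::real_vector
    \<Rightarrow> (nat \<Rightarrow> nat \<Rightarrow> nat \<Rightarrow> 'b \<Rightarrow> 'a) \<Rightarrow> (nat \<Rightarrow> 'b \<Rightarrow> 'a) \<Rightarrow> nat \<Rightarrow> nat \<Rightarrow> nat \<Rightarrow> 'b \<Rightarrow> 'a" where
  "fl_witer beta K Q w0 g eps t k q \<omega> =
     fl_local beta (\<lambda>q. g k q t \<omega>) (fl_global beta K Q w0 g eps t \<omega>) q"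

definition gen_sigma :: "'b measure \<Rightarrow> 'b set set \<Rightarrow> ('i \<Rightarrow> 'b \<Rightarrow> 'a::topological_space) \<Rightarrow> 'i set \<Rightarrow> 'b measure" where
  "gen_sigma M S X I =
     sigma (space M) (S \<union> (\<Union>i\<in>I. {X i -` B \<inter> space M | B. B \<in> sets borel}))"

definition is_cond_exp :: "'b measure \<Rightarrow> 'b measure \<Rightarrow> ('b \<Rightarrow> 'a::{banach,second_countable_topology}) \<Rightarrow> ('b \<Rightarrow> 'a) \<Rightarrow> bool" where
  "is_cond_exp M N X Y \<longleftrightarrow>
     subalgebra M N \<and> integrable M X \<and> Y \<in> borel_measurable N \<and> integrable M Y \<and>
     (\<forall>A\<in>sets N. (\<integral>\<omega>. indicator A \<omega> *\<^sub>R X \<omega> \<partial>M) = (\<integral>\<omega>. indicator A \<omega> *\<^sub>R Y \<omega> \<partial>M))"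

end

theory Submission
  imports Defs
begin

text \<open>Write F for the average objective and x_t for the gradient of F at w^t. One round
  moves the model by D_t + eps_t with D_t = -beta * sum_q (a_q + n_q), where a_q averages the
  true client gradients at the q-th local iterates and n_q the gradient noises. Bounded
  stochastic gradients keep the local iterates within beta Q G of w^t, so a_q is within
  L beta Q G of x_t, and the descent lemma together with 8 L beta Q <= 1 gives
  F(w^(t+1)) - F(w^t) <= - (beta Q / 4) |x_t|^2 - beta sum_q x_t . n_q + (x_t + L D_t) . eps_t
    + L beta^2 Q sum_q |n_q|^2 + (L/2) |eps_t|^2 + const.
  The two cross terms have mean zero by (A2) and (A5), uncorrelatedness (A4) gives
  E |n_q|^2 <= sigma_g^2 / K, and telescoping over the rounds against F >= F_star yields
  the bound.\<close>

lemma norm_sum_squared_le: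
  fixes v :: "nat \<Rightarrow> 'a::real_normed_vector"
  shows "(norm (\<Sum>i<n. v i))\<^sup>2 \<le> real n * (\<Sum>i<n. (norm (v i))\<^sup>2)"
proof -
  have "(norm (\<Sum>i<n. v i))\<^sup>2 \<le> (\<Sum>i<n. norm (v i))\<^sup>2"
    by (intro power_mono norm_sum) auto
  also have "\<dots> \<le> (\<Sum>i<n. (norm (v i))\<^sup>2) * card {..<n}"
    by (rule sum_squared_le_sum_of_squares)
  finally show ?thesis by (simp add: mult.commute)
qed

lemma norm_add_squared_le:
  fixes x y :: "'a::real_normed_vector"
  shows "(norm (x + y))\<^sup>2 \<le> 2 * (norm x)\<^sup>2 + 2 * (norm y)\<^sup>2"
proof -
  have "(norm (x + y))\<^sup>2 \<le> (norm x + norm y)\<^sup>2"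
    by (intro power_mono norm_triangle_ineq) auto
  also have "\<dots> \<le> 2 * (norm x)\<^sup>2 + 2 * (norm y)\<^sup>2"
    unfolding power2_sum using sum_squares_bound[of "norm x" "norm y"] by linarith
  finally show ?thesis .
qed

lemma norm_average_le:
  fixes v :: "nat \<Rightarrow> 'a::real_normed_vector"
  assumes "K \<ge> 1" and "\<And>k. k < K \<Longrightarrow> norm (v k) \<le> c"
  shows "norm ((1 / real K) *\<^sub>R (\<Sum>k<K. v k)) \<le> c"
proof -
  have "norm ((1 / real K) *\<^sub>R (\<Sum>k<K. v k)) \<le> (1 / real K) * (\<Sum>k<K. norm (v k))"
    by (simp add: norm_sum divide_right_mono)
  also have "\<dots> \<le> (1 / real K) * (\<Sum>k<K. c)"
    using assms(2) by (intro mult_left_mono sum_mono) auto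
  also have "\<dots> = c"
    using assms(1) by simp
  finally show ?thesis .
qed

lemma fl_local_eq: "fl_local beta h x q = x - beta *\<^sub>R (\<Sum>p<q. h p)"
  by (induction q) (simp_all add: algebra_simps)

lemma lipschitz_gradient_upper_bound:
  fixes f :: "'a::real_inner \<Rightarrow> real"
  assumes deriv: "\<And>x. (f has_derivative (\<lambda>h. f' x \<bullet> h)) (at x)"
    and lip: "\<And>x y. norm (f' x - f' y) \<le> L * norm (x - y)"
  shows "f y \<le> f x + f' x \<bullet> (y - x) + L / 2 * (norm (y - x))\<^sup>2"
proof -
  define d where "d = y - x"
  define \<psi> where "\<psi> s = f (x + s *\<^sub>R d) - s * (f' x \<bullet> d) - L / 2 * s\<^sup>2 * (norm d)\<^sup>2" for s
  define \<psi>' where "\<psi>' s = f' (x + s *\<^sub>R d) \<bullet> d - f' x \<bullet> d - L * s * (norm d)\<^sup>2" for s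
  have "(\<psi> has_real_derivative \<psi>' s) (at s)" for s
  proof -
    have "((\<lambda>s. x + s *\<^sub>R d) has_derivative (\<lambda>h. h *\<^sub>R d)) (at s)"
      by (auto intro!: derivative_eq_intros)
    from has_derivative_compose[OF this deriv]
    have "((\<lambda>s. f (x + s *\<^sub>R d)) has_real_derivative f' (x + s *\<^sub>R d) \<bullet> d) (at s)"
      by (simp add: has_field_derivative_def mult.commute[of _ "f' (x + s *\<^sub>R d) \<bullet> d"])
    then show ?thesis
      unfolding \<psi>_def \<psi>'_def by (auto intro!: derivative_eq_intros simp: power2_eq_square)
  qed
  then obtain z where z: "0 < z" "z < 1" "\<psi> 1 - \<psi> 0 = \<psi>' z"
    using MVT2[of 0 1 \<psi> \<psi>'] by auto
  have "(f' (x + z *\<^sub>R d) - f' x) \<bullet> d \<le> norm (f' (x + z *\<^sub>R d) - f' x) * norm d"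
    by (rule norm_cauchy_schwarz)
  also have "\<dots> \<le> L * norm (z *\<^sub>R d) * norm d"
    using lip[of "x + z *\<^sub>R d" x] by (intro mult_right_mono) auto
  also have "\<dots> = L * z * (norm d)\<^sup>2"
    using z by (simp add: power2_eq_square)
  finally have "\<psi>' z \<le> 0"
    unfolding \<psi>'_def by (simp add: inner_diff_left)
  then show ?thesis
    using z unfolding \<psi>_def d_def by simp
qed

lemma
  assumes "S \<subseteq> sets M"
  shows space_gen_sigma: "space (gen_sigma M S X I) = space M"
    and sets_gen_sigma_base: "S \<subseteq> sets (gen_sigma M S X I)"
    and measurable_gen_sigma_generator: "i \<in> I \<Longrightarrow> X i \<in> borel_measurable (gen_sigma M S X I)"
proof -
  have gen: "S \<union> (\<Union>i\<in>I. {X i -` B \<inter> space M | B. B \<in> sets borel}) \<subseteq> Pow (space M)"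
    using assms sets.sets_into_space by auto
  show space: "space (gen_sigma M S X I) = space M"
    unfolding gen_sigma_def using gen by (simp add: space_measure_of_conv)
  have sets: "sets (gen_sigma M S X I)
      = sigma_sets (space M) (S \<union> (\<Union>i\<in>I. {X i -` B \<inter> space M | B. B \<in> sets borel}))"
    unfolding gen_sigma_def using gen by (simp add: sets_measure_of)
  show "S \<subseteq> sets (gen_sigma M S X I)"
    unfolding sets by auto
  assume i: "i \<in> I"
  show "X i \<in> borel_measurable (gen_sigma M S X I)"
  proof (rule measurableI)
    fix B :: "'c set" assume "B \<in> sets borel"
    then show "X i -` B \<inter> space (gen_sigma M S X I) \<in> sets (gen_sigma M S X I)"
      unfolding space sets using i by (intro sigma_sets.Basic) blast
  qed auto
qed

lemma measurable_gen_sigma_base: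
  assumes "subalgebra M N" and "h \<in> borel_measurable N"
  shows "h \<in> borel_measurable (gen_sigma M (sets N) X I)"
proof (rule measurable_from_subalg[OF _ assms(2)])
  have "sets N \<subseteq> sets M" "space N = space M"
    using assms(1) by (auto simp: subalgebra_def)
  then show "subalgebra (gen_sigma M (sets N) X I) N"
    using space_gen_sigma[of "sets N" M X I] sets_gen_sigma_base[of "sets N" M X I]
    by (auto simp: subalgebra_def)
qed

lemma integrable_inner_bounded:
  fixes u v :: "'b \<Rightarrow> 'a::{real_inner,banach,second_countable_topology}"
  assumes "u \<in> borel_measurable M" and "AE \<omega> in M. norm (u \<omega>) \<le> c" and "integrable M v"
  shows "integrable M (\<lambda>\<omega>. u \<omega> \<bullet> v \<omega>)"
proof (rule Bochner_Integration.integrable_bound)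
  show "integrable M (\<lambda>\<omega>. c * norm (v \<omega>))"
    using assms(3) by auto
  show "(\<lambda>\<omega>. u \<omega> \<bullet> v \<omega>) \<in> borel_measurable M"
    using assms(1) borel_measurable_integrable[OF assms(3)] by measurable
  show "AE \<omega> in M. norm (u \<omega> \<bullet> v \<omega>) \<le> norm (c * norm (v \<omega>))"
    using assms(2)
  proof eventually_elim
    case (elim \<omega>)
    have "norm (u \<omega> \<bullet> v \<omega>) \<le> norm (u \<omega>) * norm (v \<omega>)"
      using Cauchy_Schwarz_ineq2 by simp
    also have "\<dots> \<le> norm (c * norm (v \<omega>))"
      using elim by (simp add: abs_mult mult_right_mono)
    finally show ?case .
  qed
qed

lemma is_cond_exp_real_cond_exp_inner:
  fixes X Y :: "'b \<Rightarrow> 'a::{real_inner,banach,second_countable_topology}"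
  assumes "prob_space M" and "is_cond_exp M N X Y"
  shows "AE \<omega> in M. real_cond_exp M N (\<lambda>\<omega>. X \<omega> \<bullet> b) \<omega> = Y \<omega> \<bullet> b"
proof -
  interpret prob_space M by (rule assms(1))
  have sub: "subalgebra M N" and X: "integrable M X" and Y: "integrable M Y"
    and Y_meas: "Y \<in> borel_measurable N"
    and eq: "\<And>A. A \<in> sets N \<Longrightarrow> (\<integral>\<omega>. indicator A \<omega> *\<^sub>R X \<omega> \<partial>M) = (\<integral>\<omega>. indicator A \<omega> *\<^sub>R Y \<omega> \<partial>M)"
    using assms(2) unfolding is_cond_exp_def by auto
  interpret finite_measure_subalgebra M N by unfold_locales (rule sub)
  show ?thesis
  proof (rule real_cond_exp_charact)
    fix A assume A: "A \<in> sets N"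
    then have "A \<in> sets M"
      using sub by (auto simp: subalgebra_def)
    then have "(\<integral>\<omega>\<in>A. Z \<omega> \<bullet> b \<partial>M) = (\<integral>\<omega>. indicator A \<omega> *\<^sub>R Z \<omega> \<partial>M) \<bullet> b"
      if "integrable M Z" for Z :: "'b \<Rightarrow> 'a"
      unfolding set_lebesgue_integral_def using that
      by (simp flip: integral_inner_left add: integrable_mult_indicator)
    then show "(\<integral>\<omega>\<in>A. X \<omega> \<bullet> b \<partial>M) = (\<integral>\<omega>\<in>A. Y \<omega> \<bullet> b \<partial>M)"
      using eq[OF A] X Y by simp
  next
    show "integrable M (\<lambda>\<omega>. X \<omega> \<bullet> b)" "integrable M (\<lambda>\<omega>. Y \<omega> \<bullet> b)"
      using X Y by simp_all
    show "(\<lambda>\<omega>. Y \<omega> \<bullet> b) \<in> borel_measurable N"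
      using Y_meas by measurable
  qed
qed

text \<open>The dimension factor comes from bounding each coordinate separately; any finite
  bound serves the integrability arguments below.\<close>

lemma is_cond_exp_norm_le:
  fixes X Y :: "'b \<Rightarrow> 'a::euclidean_space"
  assumes P: "prob_space M" and CE: "is_cond_exp M N X Y"
    and bound: "AE \<omega> in M. norm (X \<omega>) \<le> G"
  shows "AE \<omega> in M. norm (Y \<omega>) \<le> real DIM('a) * G"
proof -
  interpret prob_space M by (rule P)
  have sub: "subalgebra M N" and X: "integrable M X"
    using CE unfolding is_cond_exp_def by auto
  interpret finite_measure_subalgebra M N by unfold_locales (rule sub)
  have "AE \<omega> in M. \<bar>Y \<omega> \<bullet> b\<bar> \<le> G" if b: "b \<in> Basis" for b
  proof -
    have Xb: "integrable M (\<lambda>\<omega>. X \<omega> \<bullet> b)"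
      using X by simp
    have Xb_bound: "AE \<omega> in M. - G \<le> X \<omega> \<bullet> b \<and> X \<omega> \<bullet> b \<le> G"
      using bound by eventually_elim (use Basis_le_norm[OF b] in \<open>smt (verit)\<close>)
    have "AE \<omega> in M. real_cond_exp M N (\<lambda>\<omega>. X \<omega> \<bullet> b) \<omega> \<le> G"
      using Xb_bound by (intro real_cond_exp_le_c[OF Xb]) auto
    moreover have "AE \<omega> in M. real_cond_exp M N (\<lambda>\<omega>. X \<omega> \<bullet> b) \<omega> \<ge> - G"
      using Xb_bound by (intro real_cond_exp_ge_c[OF Xb]) auto
    ultimately show ?thesis
      using is_cond_exp_real_cond_exp_inner[OF P CE, of b] by eventually_elim auto
  qed
  then have "AE \<omega> in M. \<forall>b\<in>Basis. \<bar>Y \<omega> \<bullet> b\<bar> \<le> G"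
    by (intro AE_ball_countable') (auto intro: countable_finite)
  then show ?thesis
  proof eventually_elim
    case (elim \<omega>)
    have "norm (Y \<omega>) \<le> (\<Sum>b\<in>Basis. \<bar>Y \<omega> \<bullet> b\<bar>)"
      by (rule norm_le_l1)
    also have "\<dots> \<le> (\<Sum>b\<in>(Basis::'a set). G)"
      using elim by (intro sum_mono) auto
    finally show ?case by simp
  qed
qed

lemma is_cond_exp_integral_inner:
  fixes X Y h :: "'b \<Rightarrow> 'a::euclidean_space"
  assumes P: "prob_space M" and CE: "is_cond_exp M N X Y"
    and h_meas: "h \<in> borel_measurable N" and h_bound: "AE \<omega> in M. norm (h \<omega>) \<le> C"
  shows "(\<integral>\<omega>. h \<omega> \<bullet> X \<omega> \<partial>M) = (\<integral>\<omega>. h \<omega> \<bullet> Y \<omega> \<partial>M)"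
proof -
  interpret prob_space M by (rule P)
  have sub: "subalgebra M N" and X: "integrable M X" and Y: "integrable M Y"
    using CE unfolding is_cond_exp_def by auto
  interpret finite_measure_subalgebra M N by unfold_locales (rule sub)
  have h_M: "h \<in> borel_measurable M"
    by (rule measurable_from_subalg[OF sub h_meas])
  have coord: "integrable M (\<lambda>\<omega>. (h \<omega> \<bullet> b) * (Z \<omega> \<bullet> b))"
    if "integrable M Z" "b \<in> Basis" for Z :: "'b \<Rightarrow> 'a" and b
  proof -
    have "AE \<omega> in M. norm (h \<omega> \<bullet> b) \<le> C"
      using h_bound by eventually_elim (metis Basis_le_norm[OF that(2)] order_trans real_norm_def)
    then show ?thesis
      using integrable_inner_bounded[of "\<lambda>\<omega>. h \<omega> \<bullet> b" M C "\<lambda>\<omega>. Z \<omega> \<bullet> b"] h_M that(1)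
      by simp
  qed
  have split: "(\<integral>\<omega>. h \<omega> \<bullet> Z \<omega> \<partial>M) = (\<Sum>b\<in>Basis. \<integral>\<omega>. (h \<omega> \<bullet> b) * (Z \<omega> \<bullet> b) \<partial>M)"
    if "integrable M Z" for Z :: "'b \<Rightarrow> 'a"
    by (subst euclidean_inner, subst Bochner_Integration.integral_sum) (use coord[OF that] in auto)
  have "(\<integral>\<omega>. (h \<omega> \<bullet> b) * (X \<omega> \<bullet> b) \<partial>M) = (\<integral>\<omega>. (h \<omega> \<bullet> b) * (Y \<omega> \<bullet> b) \<partial>M)"
    if b: "b \<in> Basis" for b
  proof -
    have "(\<integral>\<omega>. (h \<omega> \<bullet> b) * (X \<omega> \<bullet> b) \<partial>M)
        = (\<integral>\<omega>. (h \<omega> \<bullet> b) * real_cond_exp M N (\<lambda>\<omega>. X \<omega> \<bullet> b) \<omega> \<partial>M)"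
      by (rule real_cond_exp_intg(2)[symmetric])
        (use coord[OF X b] h_meas borel_measurable_integrable[OF X] in auto)
    also have "\<dots> = (\<integral>\<omega>. (h \<omega> \<bullet> b) * (Y \<omega> \<bullet> b) \<partial>M)"
      by (rule integral_cong_AE)
        (use is_cond_exp_real_cond_exp_inner[OF P CE, of b] h_M borel_measurable_integrable[OF X]
          borel_measurable_integrable[OF Y] in auto)
    finally show ?thesis .
  qed
  then show ?thesis
    using split[OF X] split[OF Y] by simp
qed

lemma (in finite_measure) integrable_norm_sq_bounded:
  fixes u :: "'a \<Rightarrow> 'b::{banach,second_countable_topology}"
  assumes "u \<in> borel_measurable M" and "AE \<omega> in M. norm (u \<omega>) \<le> c"
  shows "integrable M (\<lambda>\<omega>. (norm (u \<omega>))\<^sup>2)"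
  using assms by (intro integrable_const_bound[where B = "c\<^sup>2"])
    (auto elim!: eventually_mono intro!: power_mono)

lemma norm_sq_sub_le_two_inner:
  fixes x y :: "'a::real_inner"
  assumes "norm (y - x) \<le> r"
  shows "(norm x)\<^sup>2 - r\<^sup>2 \<le> 2 * (x \<bullet> y)"
proof -
  have "2 * (x \<bullet> y) = (norm x)\<^sup>2 + (norm y)\<^sup>2 - (norm (y - x))\<^sup>2"
    using dot_norm_neg[of x y] by (simp add: norm_minus_commute)
  moreover have "(norm (y - x))\<^sup>2 \<le> r\<^sup>2"
    using assms by (intro power_mono) auto
  ultimately show ?thesis
    using zero_le_power2[of "norm y"] by linarith
qed

lemma norm_sum_near_squared_le:
  fixes x :: "'a::real_normed_vector" and a n :: "nat \<Rightarrow> 'a"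
  assumes a_near: "\<And>q. q < Q \<Longrightarrow> norm (a q - x) \<le> r"
  shows "(norm (\<Sum>q<Q. a q + n q))\<^sup>2
    \<le> real Q * (4 * real Q * (norm x)\<^sup>2 + 4 * real Q * r\<^sup>2 + 2 * (\<Sum>q<Q. (norm (n q))\<^sup>2))"
proof -
  have "(norm (a q + n q))\<^sup>2 \<le> 4 * (norm x)\<^sup>2 + 4 * r\<^sup>2 + 2 * (norm (n q))\<^sup>2" if "q < Q" for q
  proof -
    have "(norm (a q - x))\<^sup>2 \<le> r\<^sup>2"
      using a_near[OF that] by (intro power_mono) auto
    then show ?thesis
      using norm_add_squared_le[of "a q" "n q"] norm_add_squared_le[of x "a q - x"] by simp
  qed
  then have "(\<Sum>q<Q. (norm (a q + n q))\<^sup>2) \<le> (\<Sum>q<Q. 4 * (norm x)\<^sup>2 + 4 * r\<^sup>2 + 2 * (norm (n q))\<^sup>2)"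
    by (intro sum_mono) auto
  also have "\<dots> = 4 * real Q * (norm x)\<^sup>2 + 4 * real Q * r\<^sup>2 + 2 * (\<Sum>q<Q. (norm (n q))\<^sup>2)"
    by (simp add: sum.distrib sum_distrib_left algebra_simps)
  finally have "real Q * (\<Sum>q<Q. (norm (a q + n q))\<^sup>2)
      \<le> real Q * (4 * real Q * (norm x)\<^sup>2 + 4 * real Q * r\<^sup>2 + 2 * (\<Sum>q<Q. (norm (n q))\<^sup>2))"
    by (rule mult_left_mono) simp
  with norm_sum_squared_le[of "\<lambda>q. a q + n q" Q] show ?thesis
    by linarith
qed

lemma one_round_quadratic_bound:
  fixes x e D :: "'a::real_inner" and a n :: "nat \<Rightarrow> 'a"
  assumes L: "L \<ge> 0" and beta: "beta > 0" and step: "8 * L * real Q * beta \<le> 1"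
    and a_near: "\<And>q. q < Q \<Longrightarrow> norm (a q - x) \<le> r"
    and D: "D = - beta *\<^sub>R (\<Sum>q<Q. a q + n q)"
  shows "x \<bullet> (D + e) + L / 2 * (norm (D + e))\<^sup>2
    \<le> - beta * (\<Sum>q<Q. x \<bullet> n q) + (x + L *\<^sub>R D) \<bullet> e + L / 2 * (norm e)\<^sup>2
      - beta * real Q / 4 * (norm x)\<^sup>2 + (beta * real Q / 2 + 2 * L * beta\<^sup>2 * (real Q)\<^sup>2) * r\<^sup>2
      + L * beta\<^sup>2 * real Q * (\<Sum>q<Q. (norm (n q))\<^sup>2)"
proof -
  have expand: "x \<bullet> (D + e) + L / 2 * (norm (D + e))\<^sup>2
      = x \<bullet> D + (x + L *\<^sub>R D) \<bullet> e + L / 2 * (norm D)\<^sup>2 + L / 2 * (norm e)\<^sup>2"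
    by (simp add: power2_norm_eq_inner inner_add_left inner_add_right inner_commute algebra_simps)
  have xD: "x \<bullet> D = - beta * (\<Sum>q<Q. x \<bullet> n q) - beta * (\<Sum>q<Q. x \<bullet> a q)"
    unfolding D by (simp add: inner_sum_right sum.distrib inner_add_right algebra_simps)
  have "(norm x)\<^sup>2 - r\<^sup>2 \<le> 2 * (x \<bullet> a q)" if "q < Q" for q
    by (rule norm_sq_sub_le_two_inner[OF a_near[OF that]])
  then have "real Q * ((norm x)\<^sup>2 - r\<^sup>2) \<le> 2 * (\<Sum>q<Q. x \<bullet> a q)"
    using sum_mono[of "{..<Q}" "\<lambda>_. (norm x)\<^sup>2 - r\<^sup>2" "\<lambda>q. 2 * (x \<bullet> a q)"]
    by (simp add: sum_distrib_left)
  then have xa: "beta * real Q / 2 * (norm x)\<^sup>2 - beta * real Q / 2 * r\<^sup>2 \<le> beta * (\<Sum>q<Q. x \<bullet> a q)"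
    using mult_left_mono[of _ _ "beta / 2"] beta by (fastforce simp: algebra_simps)
  have "(norm D)\<^sup>2
      \<le> beta\<^sup>2 * (real Q * (4 * real Q * (norm x)\<^sup>2 + 4 * real Q * r\<^sup>2 + 2 * (\<Sum>q<Q. (norm (n q))\<^sup>2)))"
    using norm_sum_near_squared_le[OF a_near, where n = n] unfolding D
    by (simp add: power_mult_distrib mult_left_mono)
  then have drift_sq: "L / 2 * (norm D)\<^sup>2
      \<le> 2 * L * beta\<^sup>2 * (real Q)\<^sup>2 * (norm x)\<^sup>2 + 2 * L * beta\<^sup>2 * (real Q)\<^sup>2 * r\<^sup>2
        + L * beta\<^sup>2 * real Q * (\<Sum>q<Q. (norm (n q))\<^sup>2)"
    using mult_left_mono[of _ _ "L / 2"] L by (fastforce simp: algebra_simps power2_eq_square)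
  \<comment> \<open>the step-size condition absorbs the gradient part of (L/2)|D|^2 into the descent term\<close>
  have "(8 * L * real Q * beta) * (beta * real Q * (norm x)\<^sup>2) \<le> beta * real Q * (norm x)\<^sup>2"
    using mult_right_mono[OF step, of "beta * real Q * (norm x)\<^sup>2"] beta by simp
  then have absorb: "2 * L * beta\<^sup>2 * (real Q)\<^sup>2 * (norm x)\<^sup>2 \<le> beta * real Q / 4 * (norm x)\<^sup>2"
    by (simp add: power2_eq_square algebra_simps)
  have split: "(beta * real Q / 2 + 2 * L * beta\<^sup>2 * (real Q)\<^sup>2) * r\<^sup>2
      = beta * real Q / 2 * r\<^sup>2 + 2 * L * beta\<^sup>2 * (real Q)\<^sup>2 * r\<^sup>2"
    by (rule distrib_right)
  show ?thesis
    using expand xD xa drift_sq absorb split by linarith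
qed

lemma average_le_of_telescoping:
  fixes s I :: "nat \<Rightarrow> real"
  assumes "c > 0" and "T \<ge> 1"
    and total: "Fstar - F0 \<le> (\<Sum>t<T. s t)" and step: "\<And>t. s t \<le> C - c * I t"
  shows "(1 / real T) * (\<Sum>t<T. I t) \<le> (F0 - Fstar) / (c * real T) + C / c"
proof -
  have "Fstar - F0 \<le> (\<Sum>t<T. C - c * I t)"
    using total sum_mono[of "{..<T}" s, OF step] by linarith
  then have "c * (\<Sum>t<T. I t) \<le> F0 - Fstar + real T * C"
    by (simp add: sum.distrib sum_subtractf sum_distrib_left)
  then show ?thesis
    using assms(1,2) by (simp add: field_simps)
qed

text \<open>The hypotheses of the theorem, except T \<ge> 1 and the nonnegativity of the variance
  bounds, which the argument never uses.\<close>

locale fedavg =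
  fixes M :: "'b measure"
    and Fil :: "nat \<Rightarrow> 'b measure"
    and f :: "nat \<Rightarrow> 'a::euclidean_space \<Rightarrow> real"
    and gradf :: "nat \<Rightarrow> 'a \<Rightarrow> 'a"
    and g :: "nat \<Rightarrow> nat \<Rightarrow> nat \<Rightarrow> 'b \<Rightarrow> 'a"
    and eps :: "nat \<Rightarrow> 'b \<Rightarrow> 'a"
    and w0 :: 'a
    and W :: "nat \<Rightarrow> 'b \<Rightarrow> 'a"
    and wl :: "nat \<Rightarrow> nat \<Rightarrow> nat \<Rightarrow> 'b \<Rightarrow> 'a"
    and K Q :: nat
    and beta L Fstar G sigma_g2 sigma_air2 :: real
  assumes prob: "prob_space M"
    and K: "K \<ge> 1" and Q: "Q \<ge> 1" and beta_pos: "beta > 0"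
    and W_def: "W = fl_global beta K Q w0 g eps"
    and wl_def: "wl = fl_witer beta K Q w0 g eps"
    and Fil_sub: "\<And>t. subalgebra M (Fil t)"
    and Fil_mono: "\<And>t. sets (Fil t) \<subseteq> sets (Fil (Suc t))"
    and g_meas: "\<And>k q t. g k q t \<in> borel_measurable (Fil (Suc t))"
    and eps_meas: "\<And>t. eps t \<in> borel_measurable (Fil (Suc t))"
    and f_grad: "\<And>k x. k < K \<Longrightarrow> (f k has_derivative (\<lambda>h. gradf k x \<bullet> h)) (at x)"
    and f_smooth: "\<And>k x y. k < K \<Longrightarrow> norm (gradf k x - gradf k y) \<le> L * norm (x - y)"
    and F_lower: "\<And>w. (1 / real K) * (\<Sum>k<K. f k w) \<ge> Fstar"
    and A2: "\<And>k q t. k < K \<Longrightarrow> q < Q \<Longrightarrow>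
       is_cond_exp M (gen_sigma M (sets (Fil t)) (\<lambda>(j, p). g j p t) ({..<K} \<times> {..<q}))
         (g k q t) (\<lambda>\<omega>. gradf k (wl t k q \<omega>))"
    and A3: "\<And>k q t. k < K \<Longrightarrow> q < Q \<Longrightarrow> AE \<omega> in M. norm (g k q t \<omega>) \<le> G"
    and A4_var: "\<And>k q t. k < K \<Longrightarrow> q < Q \<Longrightarrow>
       AE \<omega> in M. real_cond_exp M (gen_sigma M (sets (Fil t)) (\<lambda>(j, p). g j p t) ({..<K} \<times> {..<q}))
         (\<lambda>\<omega>. (norm (g k q t \<omega> - gradf k (wl t k q \<omega>)))\<^sup>2) \<omega> \<le> sigma_g2"
    and A4_unc: "\<And>k j q t. k < K \<Longrightarrow> j < K \<Longrightarrow> k \<noteq> j \<Longrightarrow> q < Q \<Longrightarrow>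
       AE \<omega> in M. real_cond_exp M (gen_sigma M (sets (Fil t)) (\<lambda>(j, p). g j p t) ({..<K} \<times> {..<q}))
         (\<lambda>\<omega>. (g k q t \<omega> - gradf k (wl t k q \<omega>)) \<bullet> (g j q t \<omega> - gradf j (wl t j q \<omega>))) \<omega> = 0"
    and A5_mean: "\<And>t. is_cond_exp M
       (gen_sigma M (sets (Fil t)) (\<lambda>k \<omega>. wl t k Q \<omega> - W t \<omega>) {..<K}) (eps t) (\<lambda>_. 0)"
    and A5_var_int: "\<And>t. integrable M (\<lambda>\<omega>. (norm (eps t \<omega>))\<^sup>2)"
    and A5_var: "\<And>t. (\<integral>\<omega>. (norm (eps t \<omega>))\<^sup>2 \<partial>M) \<le> sigma_air2"
    and step: "8 * L * real Q * beta \<le> 1"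
begin

interpretation P: prob_space M by (rule prob)

definition Favg :: "'a \<Rightarrow> real" where
  "Favg x = (1 / real K) * (\<Sum>k<K. f k x)"

definition gradF :: "'a \<Rightarrow> 'a" where
  "gradF x = (1 / real K) *\<^sub>R (\<Sum>k<K. gradf k x)"

definition noise :: "nat \<Rightarrow> nat \<Rightarrow> nat \<Rightarrow> 'b \<Rightarrow> 'a" where
  "noise t k q \<omega> = g k q t \<omega> - gradf k (wl t k q \<omega>)"

definition grad_avg :: "nat \<Rightarrow> nat \<Rightarrow> 'b \<Rightarrow> 'a" where
  "grad_avg t q \<omega> = (1 / real K) *\<^sub>R (\<Sum>k<K. gradf k (wl t k q \<omega>))"

definition noise_avg :: "nat \<Rightarrow> nat \<Rightarrow> 'b \<Rightarrow> 'a" where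
  "noise_avg t q \<omega> = (1 / real K) *\<^sub>R (\<Sum>k<K. noise t k q \<omega>)"

definition drift :: "nat \<Rightarrow> 'b \<Rightarrow> 'a" where
  "drift t \<omega> = (1 / real K) *\<^sub>R (\<Sum>k<K. wl t k Q \<omega> - W t \<omega>)"

definition grads_bounded :: "nat \<Rightarrow> 'b \<Rightarrow> bool" where
  "grads_bounded t \<omega> \<longleftrightarrow> (\<forall>k\<in>{..<K}. \<forall>q\<in>{..<Q}. norm (g k q t \<omega>) \<le> G)"

definition quad_increment :: "nat \<Rightarrow> 'b \<Rightarrow> real" where
  "quad_increment t \<omega> = gradF (W t \<omega>) \<bullet> (W (Suc t) \<omega> - W t \<omega>)
     + L / 2 * (norm (W (Suc t) \<omega> - W t \<omega>))\<^sup>2"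

definition round_const :: real where
  "round_const = (beta * real Q / 2 + 2 * L * beta\<^sup>2 * (real Q)\<^sup>2) * (L * (beta * real Q * G))\<^sup>2
     + L * beta\<^sup>2 * (real Q)\<^sup>2 * sigma_g2 / real K + L / 2 * sigma_air2"

lemma L_nonneg: "L \<ge> 0"
proof -
  obtain b :: 'a where b: "b \<in> Basis"
    using nonempty_Basis by blast
  have "norm (gradf 0 b - gradf 0 0) \<le> L * norm (b - 0)"
    using K by (intro f_smooth) simp
  then show ?thesis
    using b by (metis diff_zero norm_Basis norm_ge_zero order.trans mult_cancel_left1 mult.commute)
qed

lemma G_nonneg: "G \<ge> 0"
proof -
  have "AE \<omega> in M. norm (g 0 0 0 \<omega>) \<le> G"
    using A3[of 0 0 0] K Q by simp
  then have "AE \<omega> in M. 0 \<le> G"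
    by eventually_elim (meson norm_ge_zero order.trans)
  then show ?thesis
    by simp
qed

lemma gradf_borel: "k < K \<Longrightarrow> gradf k \<in> borel_measurable borel"
  using L_nonneg f_smooth
  by (intro borel_measurable_continuous_onI lipschitz_on_continuous_on[where L = L] lipschitz_onI)
    (auto simp: dist_norm)

lemma gradF_borel [measurable]: "gradF \<in> borel_measurable borel"
  unfolding gradF_def[abs_def] using gradf_borel
  by (intro borel_measurable_scaleR borel_measurable_const borel_measurable_sum) auto

lemma wl_eq: "wl t k q \<omega> = W t \<omega> - beta *\<^sub>R (\<Sum>p<q. g k p t \<omega>)"
  unfolding W_def wl_def fl_witer_def fl_local_eq by simp

lemma W_Suc: "W (Suc t) \<omega> = W t \<omega> + drift t \<omega> + eps t \<omega>"
  unfolding drift_def by (simp add: W_def wl_def fl_witer_def Let_def)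

lemma W_increment: "W (Suc t) \<omega> - W t \<omega> = drift t \<omega> + eps t \<omega>"
  by (simp add: W_Suc)

lemma gradF_W_eq: "gradF (W t \<omega>) = grad_avg t 0 \<omega>"
  unfolding gradF_def grad_avg_def wl_eq by simp

lemma drift_eq: "drift t \<omega> = - beta *\<^sub>R (\<Sum>q<Q. grad_avg t q \<omega> + noise_avg t q \<omega>)"
proof -
  have "grad_avg t q \<omega> + noise_avg t q \<omega> = (1 / real K) *\<^sub>R (\<Sum>k<K. g k q t \<omega>)" for q
    unfolding grad_avg_def noise_avg_def noise_def
    by (simp add: scaleR_add_right[symmetric] sum.distrib[symmetric])
  then show ?thesis
    unfolding drift_def wl_eq
    by (simp add: scaleR_sum_right sum.swap[of _ "{..<Q}"] sum_negf)
qed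

lemma W_measurable_Fil: "W t \<in> borel_measurable (Fil t)"
proof (induction t)
  case 0
  then show ?case by (simp add: W_def)
next
  case (Suc t)
  have "subalgebra (Fil (Suc t)) (Fil t)"
    using Fil_mono[of t] Fil_sub[of t] Fil_sub[of "Suc t"] by (simp add: subalgebra_def)
  then have [measurable]: "W t \<in> borel_measurable (Fil (Suc t))"
    using Suc by (rule measurable_from_subalg)
  note [measurable] = g_meas eps_meas
  show ?case
    unfolding W_Suc[abs_def] drift_def wl_eq by measurable
qed

lemma
  shows W_measurable [measurable]: "W t \<in> borel_measurable M"
    and g_measurable [measurable]: "g k q t \<in> borel_measurable M"
    and eps_measurable [measurable]: "eps t \<in> borel_measurable M"
  using measurable_from_subalg[OF Fil_sub] W_measurable_Fil g_meas eps_meas by blast+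

lemma wl_measurable [measurable]: "wl t k q \<in> borel_measurable M"
  unfolding wl_eq[abs_def] by measurable

lemma drift_measurable [measurable]: "drift t \<in> borel_measurable M"
  unfolding drift_def[abs_def] by measurable

lemma noise_measurable [measurable]: "k < K \<Longrightarrow> noise t k q \<in> borel_measurable M"
  unfolding noise_def[abs_def] using gradf_borel by measurable

lemma norm_wl_diff_le:
  assumes "grads_bounded t \<omega>" "k < K" "q \<le> Q"
  shows "norm (wl t k q \<omega> - W t \<omega>) \<le> beta * real Q * G"
proof -
  have "norm (wl t k q \<omega> - W t \<omega>) \<le> beta * (\<Sum>p<q. norm (g k p t \<omega>))"
    unfolding wl_eq using beta_pos norm_sum by (simp add: mult_left_mono)
  also have "\<dots> \<le> beta * (\<Sum>p<q. G)"
    using assms beta_pos unfolding grads_bounded_def by (intro mult_left_mono sum_mono) auto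
  also have "\<dots> \<le> beta * real Q * G"
    using assms(3) beta_pos G_nonneg by (simp add: mult_left_mono mult_right_mono)
  finally show ?thesis .
qed

lemma norm_drift_le: "grads_bounded t \<omega> \<Longrightarrow> norm (drift t \<omega>) \<le> beta * real Q * G"
  unfolding drift_def using K norm_wl_diff_le by (intro norm_average_le) auto

lemma norm_grad_avg_diff_le:
  assumes "grads_bounded t \<omega>" "q < Q"
  shows "norm (grad_avg t q \<omega> - gradF (W t \<omega>)) \<le> L * (beta * real Q * G)"
proof -
  have "grad_avg t q \<omega> - gradF (W t \<omega>)
      = (1 / real K) *\<^sub>R (\<Sum>k<K. gradf k (wl t k q \<omega>) - gradf k (W t \<omega>))"
    unfolding grad_avg_def gradF_def by (simp add: sum_subtractf scaleR_diff_right)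
  also have "norm \<dots> \<le> L * (beta * real Q * G)"
  proof (rule norm_average_le[OF K])
    fix k assume "k < K"
    then show "norm (gradf k (wl t k q \<omega>) - gradf k (W t \<omega>)) \<le> L * (beta * real Q * G)"
      using f_smooth norm_wl_diff_le[OF assms(1)] assms(2) L_nonneg
      by (meson less_imp_le mult_left_mono order_trans)
  qed
  finally show ?thesis .
qed

lemma AE_grads_bounded: "AE \<omega> in M. grads_bounded t \<omega>"
  unfolding grads_bounded_def using A3 by (intro AE_ball_countable' countable_finite) auto

lemma AE_norm_gradf_wl_le:
  "k < K \<Longrightarrow> q < Q \<Longrightarrow> AE \<omega> in M. norm (gradf k (wl t k q \<omega>)) \<le> real DIM('a) * G"
  by (rule is_cond_exp_norm_le[OF prob A2 A3])

lemma AE_norm_gradF_W_le: "AE \<omega> in M. norm (gradF (W t \<omega>)) \<le> real DIM('a) * G"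
proof -
  \<comment> \<open>the true gradients at w^t are conditional expectations of the first stochastic gradients\<close>
  have "AE \<omega> in M. \<forall>k\<in>{..<K}. norm (gradf k (wl t k 0 \<omega>)) \<le> real DIM('a) * G"
    using AE_norm_gradf_wl_le Q by (intro AE_ball_countable') auto
  then show ?thesis
    unfolding gradF_W_eq grad_avg_def by eventually_elim (intro norm_average_le[OF K], auto)
qed

lemma AE_norm_noise_le:
  assumes "k < K" "q < Q"
  shows "AE \<omega> in M. norm (noise t k q \<omega>) \<le> G + real DIM('a) * G"
  using A3[OF assms, where t = t] AE_norm_gradf_wl_le[OF assms, where t = t] unfolding noise_def
  by eventually_elim (smt (verit) norm_triangle_ineq4)

lemma integrable_noise: "k < K \<Longrightarrow> q < Q \<Longrightarrow> integrable M (noise t k q)"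
  using A2 unfolding noise_def[abs_def] is_cond_exp_def by auto

lemma integrable_noise_avg: "q < Q \<Longrightarrow> integrable M (noise_avg t q)"
  unfolding noise_avg_def[abs_def] using integrable_noise
  by (intro integrable_scaleR_right Bochner_Integration.integrable_sum) auto

lemma integral_inner_noise:
  assumes "k < K" "q < Q"
    and h_meas: "h \<in> borel_measurable (Fil t)" and h_bound: "AE \<omega> in M. norm (h \<omega>) \<le> C"
  shows "(\<integral>\<omega>. h \<omega> \<bullet> noise t k q \<omega> \<partial>M) = 0"
proof -
  note CE = A2[OF assms(1,2), of t]
  have [measurable]: "h \<in> borel_measurable M"
    by (rule measurable_from_subalg[OF Fil_sub h_meas])
  have "integrable M (\<lambda>\<omega>. h \<omega> \<bullet> Z \<omega>)" if "integrable M Z" for Z :: "'b \<Rightarrow> 'a"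
    by (rule integrable_inner_bounded[OF _ h_bound that]) measurable
  then have "(\<integral>\<omega>. h \<omega> \<bullet> noise t k q \<omega> \<partial>M)
      = (\<integral>\<omega>. h \<omega> \<bullet> g k q t \<omega> \<partial>M) - (\<integral>\<omega>. h \<omega> \<bullet> gradf k (wl t k q \<omega>) \<partial>M)"
    using CE unfolding noise_def is_cond_exp_def by (simp add: inner_diff_right)
  also have "\<dots> = 0"
    using is_cond_exp_integral_inner[OF prob CE measurable_gen_sigma_base[OF Fil_sub h_meas] h_bound]
    by simp
  finally show ?thesis .
qed

lemma integral_gradF_inner_noise_avg:
  assumes "q < Q"
  shows "(\<integral>\<omega>. gradF (W t \<omega>) \<bullet> noise_avg t q \<omega> \<partial>M) = 0"
proof -
  have x_meas: "(\<lambda>\<omega>. gradF (W t \<omega>)) \<in> borel_measurable (Fil t)"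
    by (rule measurable_compose[OF W_measurable_Fil gradF_borel])
  have "integrable M (\<lambda>\<omega>. gradF (W t \<omega>) \<bullet> noise t k q \<omega>)" if "k < K" for k
    by (rule integrable_inner_bounded[OF _ AE_norm_gradF_W_le integrable_noise[OF that assms]]) measurable
  then have "(\<integral>\<omega>. gradF (W t \<omega>) \<bullet> noise_avg t q \<omega> \<partial>M)
      = (1 / real K) * (\<Sum>k<K. \<integral>\<omega>. gradF (W t \<omega>) \<bullet> noise t k q \<omega> \<partial>M)"
    unfolding noise_avg_def by (simp add: inner_sum_right Bochner_Integration.integral_sum)
  also have "\<dots> = 0"
    using integral_inner_noise[OF _ assms x_meas AE_norm_gradF_W_le] by simp
  finally show ?thesis .
qed

lemma integral_inner_eps: "(\<integral>\<omega>. (gradF (W t \<omega>) + L *\<^sub>R drift t \<omega>) \<bullet> eps t \<omega> \<partial>M) = 0"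
proof -
  let ?N = "gen_sigma M (sets (Fil t)) (\<lambda>k \<omega>. wl t k Q \<omega> - W t \<omega>) {..<K}"
  have "sets (Fil t) \<subseteq> sets M"
    using Fil_sub[of t] by (simp add: subalgebra_def)
  note [measurable] = measurable_gen_sigma_generator[OF this, where X = "\<lambda>k \<omega>. wl t k Q \<omega> - W t \<omega>"]
  have [measurable]: "(\<lambda>\<omega>. gradF (W t \<omega>)) \<in> borel_measurable ?N"
    by (intro measurable_gen_sigma_base[OF Fil_sub] measurable_compose[OF W_measurable_Fil gradF_borel])
  have "(\<lambda>\<omega>. gradF (W t \<omega>) + L *\<^sub>R drift t \<omega>) \<in> borel_measurable ?N"
    unfolding drift_def by measurable
  moreover have "AE \<omega> in M. norm (gradF (W t \<omega>) + L *\<^sub>R drift t \<omega>)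
      \<le> real DIM('a) * G + L * (beta * real Q * G)"
    using AE_norm_gradF_W_le[of t] AE_grads_bounded[of t]
  proof eventually_elim
    case (elim \<omega>)
    then show ?case
      using norm_triangle_ineq[of "gradF (W t \<omega>)" "L *\<^sub>R drift t \<omega>"] norm_drift_le[OF elim(2)] L_nonneg
      by (simp add: mult_left_mono add_mono order_trans)
  qed
  ultimately show ?thesis
    using is_cond_exp_integral_inner[OF prob A5_mean] by simp
qed

lemma integrable_noise_inner:
  assumes "k < K" "j < K" "q < Q"
  shows "integrable M (\<lambda>\<omega>. noise t k q \<omega> \<bullet> noise t j q \<omega>)"
  by (rule integrable_inner_bounded[OF noise_measurable AE_norm_noise_le integrable_noise])
    (use assms in auto)

lemma integral_noise_inner_le:
  assumes k: "k < K" and j: "j < K" and q: "q < Q"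
  shows "(\<integral>\<omega>. noise t k q \<omega> \<bullet> noise t j q \<omega> \<partial>M) \<le> (if k = j then sigma_g2 else 0)"
proof -
  let ?N = "gen_sigma M (sets (Fil t)) (\<lambda>(j, p). g j p t) ({..<K} \<times> {..<q})"
  let ?h = "\<lambda>\<omega>. noise t k q \<omega> \<bullet> noise t j q \<omega>"
  have "subalgebra M ?N"
    using A2[OF k q] unfolding is_cond_exp_def by auto
  then interpret S: finite_measure_subalgebra M ?N
    by unfold_locales
  have "(\<integral>\<omega>. ?h \<omega> \<partial>M) = (\<integral>\<omega>. real_cond_exp M ?N ?h \<omega> \<partial>M)"
    using S.real_cond_exp_int(2)[OF integrable_noise_inner[OF k j q]] by simp
  also have "\<dots> \<le> (\<integral>\<omega>. (if k = j then sigma_g2 else 0) \<partial>M)"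
  proof (rule integral_mono_AE)
    show "integrable M (real_cond_exp M ?N ?h)"
      by (rule S.real_cond_exp_int(1)[OF integrable_noise_inner[OF k j q]])
    show "AE \<omega> in M. real_cond_exp M ?N ?h \<omega> \<le> (if k = j then sigma_g2 else 0)"
    proof (cases "k = j")
      case True
      then show ?thesis
        using A4_var[OF k q, where t = t] unfolding noise_def by (simp add: power2_norm_eq_inner)
    next
      case False
      show ?thesis
        using A4_unc[OF k j False q, where t = t] unfolding noise_def if_not_P[OF False]
        by eventually_elim simp
    qed
  qed simp
  finally show ?thesis
    by (simp add: P.prob_space)
qed

lemma integral_norm_noise_avg_sq_le:
  assumes q: "q < Q"
  shows "integrable M (\<lambda>\<omega>. (norm (noise_avg t q \<omega>))\<^sup>2)"
    and "(\<integral>\<omega>. (norm (noise_avg t q \<omega>))\<^sup>2 \<partial>M) \<le> sigma_g2 / real K"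
proof -
  have expand: "(norm (noise_avg t q \<omega>))\<^sup>2
      = (\<Sum>k<K. \<Sum>j<K. (1 / real K)\<^sup>2 * (noise t j q \<omega> \<bullet> noise t k q \<omega>))" for \<omega>
    unfolding noise_avg_def power2_norm_eq_inner
    by (simp add: inner_sum_left inner_sum_right sum_distrib_left power2_eq_square mult.assoc)
  have int: "integrable M (\<lambda>\<omega>. (1 / real K)\<^sup>2 * (noise t j q \<omega> \<bullet> noise t k q \<omega>))"
    if "k < K" "j < K" for k j
    using integrable_noise_inner[OF that(2,1) q] by simp
  then show "integrable M (\<lambda>\<omega>. (norm (noise_avg t q \<omega>))\<^sup>2)"
    unfolding expand by (intro Bochner_Integration.integrable_sum) auto
  have "(\<integral>\<omega>. (norm (noise_avg t q \<omega>))\<^sup>2 \<partial>M)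
      = (\<Sum>k<K. \<Sum>j<K. (1 / real K)\<^sup>2 * (\<integral>\<omega>. noise t j q \<omega> \<bullet> noise t k q \<omega> \<partial>M))"
    unfolding expand using int
  proof (subst Bochner_Integration.integral_sum)
    show "(\<Sum>k<K. \<integral>\<omega>. (\<Sum>j<K. (1 / real K)\<^sup>2 * (noise t j q \<omega> \<bullet> noise t k q \<omega>)) \<partial>M)
        = (\<Sum>k<K. \<Sum>j<K. (1 / real K)\<^sup>2 * (\<integral>\<omega>. noise t j q \<omega> \<bullet> noise t k q \<omega> \<partial>M))"
      using int by (intro sum.cong refl) (subst Bochner_Integration.integral_sum, auto)
  qed (use int in auto)
  also have "\<dots> \<le> (\<Sum>k<K. \<Sum>j<K. (1 / real K)\<^sup>2 * (if j = k then sigma_g2 else 0))"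
    using integral_noise_inner_le[OF _ _ q] by (intro sum_mono mult_left_mono) auto
  also have "\<dots> = sigma_g2 / real K"
    using K by (simp add: sum.delta power2_eq_square flip: sum_divide_distrib)
  finally show "(\<integral>\<omega>. (norm (noise_avg t q \<omega>))\<^sup>2 \<partial>M) \<le> sigma_g2 / real K" .
qed

lemma AE_norm_drift_le: "AE \<omega> in M. norm (drift t \<omega>) \<le> beta * real Q * G"
  using AE_grads_bounded[of t] by (rule eventually_mono) (rule norm_drift_le)

lemma integrable_eps: "integrable M (eps t)"
  using A5_mean[of t] unfolding is_cond_exp_def by simp

lemma integrable_drift: "integrable M (drift t)"
  using AE_norm_drift_le by (intro P.integrable_const_bound) auto

lemma integrable_gradF_inner: "integrable M Z \<Longrightarrow> integrable M (\<lambda>\<omega>. gradF (W t \<omega>) \<bullet> Z \<omega>)"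
  by (rule integrable_inner_bounded[OF _ AE_norm_gradF_W_le]) measurable

lemma integrable_drift_inner_eps: "integrable M (\<lambda>\<omega>. drift t \<omega> \<bullet> eps t \<omega>)"
  by (rule integrable_inner_bounded[OF drift_measurable AE_norm_drift_le integrable_eps])

lemma integrable_quad_increment: "integrable M (quad_increment t)"
proof -
  have "quad_increment t = (\<lambda>\<omega>. gradF (W t \<omega>) \<bullet> drift t \<omega> + gradF (W t \<omega>) \<bullet> eps t \<omega>
      + L / 2 * ((norm (drift t \<omega>))\<^sup>2 + 2 * (drift t \<omega> \<bullet> eps t \<omega>) + (norm (eps t \<omega>))\<^sup>2))"
    unfolding quad_increment_def[abs_def] W_increment
    by (simp add: power2_norm_eq_inner inner_add_left inner_add_right inner_commute algebra_simps)
  then show ?thesis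
    using integrable_gradF_inner[OF integrable_drift] integrable_gradF_inner[OF integrable_eps]
      P.integrable_norm_sq_bounded[OF drift_measurable AE_norm_drift_le]
      integrable_drift_inner_eps A5_var_int[of t]
    by simp
qed

definition quad_bound :: "nat \<Rightarrow> 'b \<Rightarrow> real" where
  "quad_bound t \<omega> = - beta * (\<Sum>q<Q. gradF (W t \<omega>) \<bullet> noise_avg t q \<omega>)
     + (gradF (W t \<omega>) + L *\<^sub>R drift t \<omega>) \<bullet> eps t \<omega> + L / 2 * (norm (eps t \<omega>))\<^sup>2
     - beta * real Q / 4 * (norm (gradF (W t \<omega>)))\<^sup>2
     + (beta * real Q / 2 + 2 * L * beta\<^sup>2 * (real Q)\<^sup>2) * (L * (beta * real Q * G))\<^sup>2
     + L * beta\<^sup>2 * real Q * (\<Sum>q<Q. (norm (noise_avg t q \<omega>))\<^sup>2)"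

lemma AE_quad_increment_le: "AE \<omega> in M. quad_increment t \<omega> \<le> quad_bound t \<omega>"
  using AE_grads_bounded[of t]
proof eventually_elim
  case (elim \<omega>)
  show ?case
    unfolding quad_increment_def quad_bound_def W_increment
    by (rule one_round_quadratic_bound[OF L_nonneg beta_pos step norm_grad_avg_diff_le[OF elim] drift_eq])
qed

lemma integral_quad_bound:
  shows "integrable M (quad_bound t)"
    and "(\<integral>\<omega>. quad_bound t \<omega> \<partial>M)
      \<le> round_const - beta * real Q / 4 * (\<integral>\<omega>. (norm (gradF (W t \<omega>)))\<^sup>2 \<partial>M)"
proof -
  have noise_int: "integrable M (\<lambda>\<omega>. gradF (W t \<omega>) \<bullet> noise_avg t q \<omega>)" if "q < Q" for q
    by (rule integrable_gradF_inner[OF integrable_noise_avg[OF that]])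
  have noise_sum_int: "integrable M (\<lambda>\<omega>. \<Sum>q<Q. gradF (W t \<omega>) \<bullet> noise_avg t q \<omega>)"
    using noise_int by (intro Bochner_Integration.integrable_sum) auto
  have noise_sq_sum_int: "integrable M (\<lambda>\<omega>. \<Sum>q<Q. (norm (noise_avg t q \<omega>))\<^sup>2)"
    using integral_norm_noise_avg_sq_le(1) by (intro Bochner_Integration.integrable_sum) auto
  note parts_int = noise_sum_int noise_sq_sum_int integrable_gradF_inner[OF integrable_eps]
    integrable_drift_inner_eps A5_var_int[of t]
    P.integrable_norm_sq_bounded[OF _ AE_norm_gradF_W_le]
  show "integrable M (quad_bound t)"
    unfolding quad_bound_def[abs_def] using parts_int by (simp add: inner_add_left)
  have "(\<integral>\<omega>. quad_bound t \<omega> \<partial>M)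
      = - beta * (\<Sum>q<Q. \<integral>\<omega>. gradF (W t \<omega>) \<bullet> noise_avg t q \<omega> \<partial>M)
        + (\<integral>\<omega>. (gradF (W t \<omega>) + L *\<^sub>R drift t \<omega>) \<bullet> eps t \<omega> \<partial>M)
        + L / 2 * (\<integral>\<omega>. (norm (eps t \<omega>))\<^sup>2 \<partial>M)
        - beta * real Q / 4 * (\<integral>\<omega>. (norm (gradF (W t \<omega>)))\<^sup>2 \<partial>M)
        + (beta * real Q / 2 + 2 * L * beta\<^sup>2 * (real Q)\<^sup>2) * (L * (beta * real Q * G))\<^sup>2
        + L * beta\<^sup>2 * real Q * (\<Sum>q<Q. \<integral>\<omega>. (norm (noise_avg t q \<omega>))\<^sup>2 \<partial>M)"
    unfolding quad_bound_def using parts_int noise_int integral_norm_noise_avg_sq_le(1)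
    by (simp add: inner_add_left Bochner_Integration.integral_sum P.prob_space)
  also have "\<dots> \<le> round_const - beta * real Q / 4 * (\<integral>\<omega>. (norm (gradF (W t \<omega>)))\<^sup>2 \<partial>M)"
  proof -
    have "(\<Sum>q<Q. \<integral>\<omega>. (norm (noise_avg t q \<omega>))\<^sup>2 \<partial>M) \<le> real Q * (sigma_g2 / real K)"
      using sum_mono[of "{..<Q}" _ "\<lambda>_. sigma_g2 / real K"] integral_norm_noise_avg_sq_le(2) by simp
    then have "L * beta\<^sup>2 * real Q * (\<Sum>q<Q. \<integral>\<omega>. (norm (noise_avg t q \<omega>))\<^sup>2 \<partial>M)
        \<le> L * beta\<^sup>2 * real Q * (real Q * (sigma_g2 / real K))"
      using L_nonneg by (intro mult_left_mono) auto
    moreover have "L / 2 * (\<integral>\<omega>. (norm (eps t \<omega>))\<^sup>2 \<partial>M) \<le> L / 2 * sigma_air2"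
      using A5_var L_nonneg by (simp add: mult_left_mono)
    ultimately show ?thesis
      using integral_gradF_inner_noise_avg integral_inner_eps[of t]
      unfolding round_const_def by (simp add: power2_eq_square)
  qed
  finally show "(\<integral>\<omega>. quad_bound t \<omega> \<partial>M)
      \<le> round_const - beta * real Q / 4 * (\<integral>\<omega>. (norm (gradF (W t \<omega>)))\<^sup>2 \<partial>M)" .
qed

lemma expected_descent_step:
  "(\<integral>\<omega>. quad_increment t \<omega> \<partial>M)
    \<le> round_const - beta * real Q / 4 * (\<integral>\<omega>. (norm (gradF (W t \<omega>)))\<^sup>2 \<partial>M)"
  using integral_mono_AE[OF integrable_quad_increment integral_quad_bound(1) AE_quad_increment_le,
      of t] integral_quad_bound(2)[of t]
  by linarith

lemma Favg_quadratic_upper_bound: "Favg y \<le> Favg x + gradF x \<bullet> (y - x) + L / 2 * (norm (y - x))\<^sup>2"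
proof -
  have "(\<Sum>k<K. f k y) \<le> (\<Sum>k<K. f k x + gradf k x \<bullet> (y - x) + L / 2 * (norm (y - x))\<^sup>2)"
    by (intro sum_mono lipschitz_gradient_upper_bound f_grad f_smooth) auto
  also have "\<dots> = (\<Sum>k<K. f k x) + (\<Sum>k<K. gradf k x) \<bullet> (y - x) + real K * (L / 2 * (norm (y - x))\<^sup>2)"
    by (simp add: sum.distrib inner_sum_left)
  finally have "(1 / real K) * (\<Sum>k<K. f k y)
      \<le> (1 / real K) * ((\<Sum>k<K. f k x) + (\<Sum>k<K. gradf k x) \<bullet> (y - x) + real K * (L / 2 * (norm (y - x))\<^sup>2))"
    by (rule mult_left_mono) simp
  then show ?thesis
    using K unfolding Favg_def gradF_def by (simp add: algebra_simps)
qed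

lemma expected_telescoping: "Fstar - Favg w0 \<le> (\<Sum>t<n. \<integral>\<omega>. quad_increment t \<omega> \<partial>M)"
proof -
  have "Fstar - Favg w0 \<le> (\<Sum>t<n. quad_increment t \<omega>)" for \<omega>
  proof -
    have "Fstar - Favg w0 \<le> Favg (W n \<omega>) - Favg (W 0 \<omega>)"
      using F_lower[of "W n \<omega>"] unfolding Favg_def by (simp add: W_def)
    also have "\<dots> = (\<Sum>t<n. Favg (W (Suc t) \<omega>) - Favg (W t \<omega>))"
      by (rule sum_lessThan_telescope[symmetric])
    also have "\<dots> \<le> (\<Sum>t<n. quad_increment t \<omega>)"
      unfolding quad_increment_def using Favg_quadratic_upper_bound by (intro sum_mono) (simp add: algebra_simps)
    finally show ?thesis .
  qed
  then have "(\<integral>\<omega>. Fstar - Favg w0 \<partial>M) \<le> (\<integral>\<omega>. (\<Sum>t<n. quad_increment t \<omega>) \<partial>M)"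
    using integrable_quad_increment by (intro integral_mono) auto
  then show ?thesis
    using integrable_quad_increment by (simp add: Bochner_Integration.integral_sum P.prob_space)
qed

lemma round_const_scaled:
  "4 * round_const / (beta * real Q)
    = 2 * L\<^sup>2 * beta\<^sup>2 * (real Q)\<^sup>2 * G\<^sup>2 + 8 * L ^ 3 * beta ^ 3 * (real Q) ^ 3 * G\<^sup>2
      + 4 * L * beta * real Q / real K * sigma_g2 + 2 * L / (beta * real Q) * sigma_air2"
  using beta_pos Q unfolding round_const_def
  by (simp add: field_simps power2_eq_square power3_eq_cube)

end

theorem theorem1:
  fixes M :: "'b measure"
    and Fil :: "nat \<Rightarrow> 'b measure"
    and f :: "nat \<Rightarrow> 'a::euclidean_space \<Rightarrow> real"
    and gradf :: "nat \<Rightarrow> 'a \<Rightarrow> 'a"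
    and g :: "nat \<Rightarrow> nat \<Rightarrow> nat \<Rightarrow> 'b \<Rightarrow> 'a"
    and eps :: "nat \<Rightarrow> 'b \<Rightarrow> 'a"
    and w0 :: 'a
    and W :: "nat \<Rightarrow> 'b \<Rightarrow> 'a"
    and wl :: "nat \<Rightarrow> nat \<Rightarrow> nat \<Rightarrow> 'b \<Rightarrow> 'a"
    and K Q T :: nat
    and beta L Fstar G sigma_g2 sigma_air2 :: real
  assumes prob: "prob_space M"
    and K: "K \<ge> 1" and Q: "Q \<ge> 1" and beta_pos: "beta > 0"
    and sg_nonneg: "sigma_g2 \<ge> 0" and sair_nonneg: "sigma_air2 \<ge> 0"
    \<comment> \<open>iterates\<close>
    and W_def: "W = fl_global beta K Q w0 g eps"
    and wl_def: "wl = fl_witer beta K Q w0 g eps"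
    \<comment> \<open>filtration F_t: generated by the global model and all randomness up to round t\<close>
    and Fil_sub: "\<And>t. subalgebra M (Fil t)"
    and Fil_mono: "\<And>t. sets (Fil t) \<subseteq> sets (Fil (Suc t))"
    and g_meas: "\<And>k q t. g k q t \<in> borel_measurable (Fil (Suc t))"
    and eps_meas: "\<And>t. eps t \<in> borel_measurable (Fil (Suc t))"
    \<comment> \<open>(A1)\<close>
    and f_grad: "\<And>k x. k < K \<Longrightarrow> (f k has_derivative (\<lambda>h. gradf k x \<bullet> h)) (at x)"
    and f_smooth: "\<And>k x y. k < K \<Longrightarrow> norm (gradf k x - gradf k y) \<le> L * norm (x - y)"
    and F_lower: "\<And>w. (1 / real K) * (\<Sum>k<K. f k w) \<ge> Fstar"
    \<comment> \<open>(A2): unbiasedness given the local iterates (and the history)\<close>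
    and A2: "\<And>k q t. k < K \<Longrightarrow> q < Q \<Longrightarrow>
       is_cond_exp M (gen_sigma M (sets (Fil t)) (\<lambda>(j, p). g j p t) ({..<K} \<times> {..<q}))
         (g k q t) (\<lambda>\<omega>. gradf k (wl t k q \<omega>))"
    \<comment> \<open>(A3)\<close>
    and A3: "\<And>k q t. k < K \<Longrightarrow> q < Q \<Longrightarrow> AE \<omega> in M. norm (g k q t \<omega>) \<le> G"
    \<comment> \<open>(A4): conditional variance bound and conditional uncorrelatedness across clients\<close>
    and A4_var: "\<And>k q t. k < K \<Longrightarrow> q < Q \<Longrightarrow>
       AE \<omega> in M. real_cond_exp M (gen_sigma M (sets (Fil t)) (\<lambda>(j, p). g j p t) ({..<K} \<times> {..<q}))
         (\<lambda>\<omega>. (norm (g k q t \<omega> - gradf k (wl t k q \<omega>)))\<^sup>2) \<omega> \<le> sigma_g2"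
    and A4_unc: "\<And>k j q t. k < K \<Longrightarrow> j < K \<Longrightarrow> k \<noteq> j \<Longrightarrow> q < Q \<Longrightarrow>
       AE \<omega> in M. real_cond_exp M (gen_sigma M (sets (Fil t)) (\<lambda>(j, p). g j p t) ({..<K} \<times> {..<q}))
         (\<lambda>\<omega>. (g k q t \<omega> - gradf k (wl t k q \<omega>)) \<bullet> (g j q t \<omega> - gradf j (wl t j q \<omega>))) \<omega> = 0"
    \<comment> \<open>(A5): aggregation error\<close>
    and A5_mean: "\<And>t. is_cond_exp M
       (gen_sigma M (sets (Fil t)) (\<lambda>k \<omega>. wl t k Q \<omega> - W t \<omega>) {..<K}) (eps t) (\<lambda>_. 0)"
    and A5_var_int: "\<And>t. integrable M (\<lambda>\<omega>. (norm (eps t \<omega>))\<^sup>2)"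
    and A5_var: "\<And>t. (\<integral>\<omega>. (norm (eps t \<omega>))\<^sup>2 \<partial>M) \<le> sigma_air2"
    \<comment> \<open>stepsize condition beta \<le> 1/(8LQ)\<close>
    and step: "8 * L * real Q * beta \<le> 1"
    and T: "T \<ge> 1"
  shows "(1 / real T) * (\<Sum>t<T. \<integral>\<omega>. (norm ((1 / real K) *\<^sub>R (\<Sum>k<K. gradf k (W t \<omega>))))\<^sup>2 \<partial>M)
    \<le> 4 * ((1 / real K) * (\<Sum>k<K. f k w0) - Fstar) / (beta * real Q * real T)
      + 2 * L\<^sup>2 * beta\<^sup>2 * (real Q)\<^sup>2 * G\<^sup>2
      + 8 * L ^ 3 * beta ^ 3 * (real Q) ^ 3 * G\<^sup>2
      + 4 * L * beta * real Q / real K * sigma_g2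
      + 2 * L / (beta * real Q) * sigma_air2"
proof -
  interpret fedavg M Fil f gradf g eps w0 W wl K Q beta L Fstar G sigma_g2 sigma_air2
    by (rule fedavg.intro) (fact assms)+
  have "(1 / real T) * (\<Sum>t<T. \<integral>\<omega>. (norm (gradF (W t \<omega>)))\<^sup>2 \<partial>M)
      \<le> (Favg w0 - Fstar) / (beta * real Q / 4 * real T) + round_const / (beta * real Q / 4)"
    by (rule average_le_of_telescoping[OF _ T expected_telescoping expected_descent_step])
      (use beta_pos Q in simp)
  also have "\<dots> = 4 * (Favg w0 - Fstar) / (beta * real Q * real T) + 4 * round_const / (beta * real Q)"
    by (simp add: field_simps)
  finally show ?thesis
    unfolding round_const_scaled gradF_def Favg_def by (simp add: add.assoc)
qed

end
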